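(* Let $x\in\mathbb{R}^n$. If $G_i^-(x)=G_i^+(x)$ for any $i\in I$, then $G_{\min}^+(x)=G_{\min}^-(x)$. If the equidistant sets belonging to the focal sets $K$ and $L_i$ are equidistant functions for any $i\in I$, then so is the equidistant set belonging to the focal sets $K$ and $L$.
   Context: For sets $A,B\subset\mathbb{R}^{n+1}$ and a point $p$, $d(p,A)=\inf\{|p-a| : a\in A\}$, and the equidistant set is $\{A=B\}=\{p : d(p,A)=d(p,B)\}$. Let $I$ be a finite, nonempty index set and $\{f_i\mid i\in I\}$ a family of positive-valued, continuous functions on $\mathbb{R}^n$, with epigraphs $L_i=\{(x,y)\mid f_i(x)\le y\}\subset\mathbb{R}^n\times\mathbb{R}$. Let $K\subset\mathbb{R}^{n+1}$ be a nonempty, closed set containing a point $(x_*,y_* )$ with $y_*\le 0$ (i.e. $K$ extends into the closed negative half-space), and with $K\cap L_i=\emptyset$ for all $i\in I$. Let $f_{\min}(x)=\min\{f_i(x)\mid i\in I\}$; its epigraph is $L=\bigcup_{i\in I}L_i$, and $K\cap L=\emptyset$. For focal sets $K$ and a (disjoint) epigraph $M$, the upper/lower equidistant functions are $G^+(x)=\sup\{y : d((x,y),K)=d((x,y),M)\}$ and $G^-(x)=\inf\{y : d((x,y),K)=d((x,y),M)\}$; when the equidistant point on each vertical line is unique, the equidistant set is the graph of the equidistant function $G$ defined by $d((x,G(x)),K)=d((x,G(x)),M)$. Here $G_i^\pm$ are the upper/lower equidistant functions for $K$ and $L_i$, and $G_{\min}^\pm$ those for $K$ and $L$. It has been shown that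 $\min_i G_i^-(x)\le G_{\min}^-(x)\le G_{\min}^+(x)\le\min_i G_i^+(x)$ for all $x$. *)

theory Defs
  imports "HOL-Analysis.Analysis"
begin

text \<open>Points of R^(n+1) are pairs (x,y) with x in R^n (type real^'n) and y real;
  the product metric on pairs is the Euclidean one.  Distance to a set is infdist.\<close>

definition equidistant_set :: "('a::metric_space) set \<Rightarrow> 'a set \<Rightarrow> 'a set" where
  "equidistant_set A B = {p. infdist p A = infdist p B}"

definition upper_equidistant_fun ::
  "(('a::metric_space) \<times> real) set \<Rightarrow> ('a \<times> real) set \<Rightarrow> 'a \<Rightarrow> ereal" where
  "upper_equidistant_fun K M x = Sup {ereal y | y. (x, y) \<in> equidistant_set K M}"

definition lower_equidistant_fun ::
  "(('a::metric_space) \<times> real) set \<Rightarrow> ('a \<times> real) set \<Rightarrow> 'a \<Rightarrow> ereal" where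
  "lower_equidistant_fun K M x = Inf {ereal y | y. (x, y) \<in> equidistant_set K M}"

definition is_equidistant_function ::
  "(('a::metric_space) \<times> real) set \<Rightarrow> ('a \<times> real) set \<Rightarrow> bool" where
  "is_equidistant_function K M \<longleftrightarrow> (\<forall>x. \<exists>!y. (x, y) \<in> equidistant_set K M)"

end

(*
  For fixed x, consider the defect d_M(y) = d((x,y),K) - d((x,y),M) along the vertical line
  over x.  For M = L_i it is continuous, positive on L_i (which is disjoint from the closed
  set K), and negative far below, since K reaches the closed lower half-space while every
  point of L_i lies above the positive, continuous f_i.  Hence if its zero G_i(x) is unique,
  d_{L_i} is negative below and positive above G_i(x).  Because d((x,y),L) = min_i d((x,y),L_i),
  the defect of L is max_i d_{L_i}, which then changes sign exactly once, at min_i G_i(x).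
*)
theory Submission
  imports Defs
begin

definition crosses_upward_at :: "(real \<Rightarrow> real) \<Rightarrow> real \<Rightarrow> bool" where
  "crosses_upward_at \<phi> g \<longleftrightarrow> (\<forall>y<g. \<phi> y < 0) \<and> \<phi> g = 0 \<and> (\<forall>y>g. 0 < \<phi> y)"

lemma crosses_upward_at_zero_iff:
  "crosses_upward_at \<phi> g \<Longrightarrow> \<phi> y = 0 \<longleftrightarrow> y = g"
  unfolding crosses_upward_at_def by (cases y g rule: linorder_cases) auto

lemma continuous_without_zero_keeps_sign:
  fixes \<phi> :: "real \<Rightarrow> real"
  assumes cont: "continuous_on {u..v} \<phi>" and "u \<le> v" and nonzero: "\<forall>z\<in>{u..v}. \<phi> z \<noteq> 0"
  shows "0 < \<phi> u \<longleftrightarrow> 0 < \<phi> v"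
proof
  assume "0 < \<phi> u"
  show "0 < \<phi> v"
  proof (rule ccontr)
    assume "\<not> 0 < \<phi> v"
    then obtain z where "u \<le> z" "z \<le> v" "\<phi> z = 0"
      using IVT2'[where f=\<phi> and a=u and b=v and y=0] cont \<open>u \<le> v\<close> \<open>0 < \<phi> u\<close> by force
    then show False
      using nonzero by auto
  qed
next
  assume "0 < \<phi> v"
  show "0 < \<phi> u"
  proof (rule ccontr)
    assume "\<not> 0 < \<phi> u"
    then obtain z where "u \<le> z" "z \<le> v" "\<phi> z = 0"
      using IVT'[where f=\<phi> and a=u and b=v and y=0] cont \<open>u \<le> v\<close> \<open>0 < \<phi> v\<close> by force
    then show False
      using nonzero by auto
  qed
qed

lemma crosses_upward_at_if_unique_zero:
  fixes \<phi> :: "real \<Rightarrow> real"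
  assumes cont: "continuous_on UNIV \<phi>" and zero: "\<And>y. \<phi> y = 0 \<longleftrightarrow> y = g"
    and pos: "\<And>y. b \<le> y \<Longrightarrow> 0 < \<phi> y" and neg: "\<phi> a < 0"
  shows "crosses_upward_at \<phi> g"
proof -
  have keeps_sign: "0 < \<phi> u \<longleftrightarrow> 0 < \<phi> v" if "u \<le> v" "g \<notin> {u..v}" for u v
  proof (rule continuous_without_zero_keeps_sign[OF _ \<open>u \<le> v\<close>])
    show "continuous_on {u..v} \<phi>"
      using continuous_on_subset[OF cont subset_UNIV] .
    show "\<forall>z\<in>{u..v}. \<phi> z \<noteq> 0"
      using zero that(2) by auto
  qed
  have above: "0 < \<phi> y" if "g < y" for y
    using keeps_sign[of y "max y b"] pos[of "max y b"] that by simp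
  have "a < g"
    using above[of a] neg zero[of a] by force
  have below: "\<phi> y < 0" if "y < g" for y
  proof -
    have "\<not> 0 < \<phi> y"
    proof (cases "a \<le> y")
      case True
      then show ?thesis
        using keeps_sign[of a y] neg that by simp
    next
      case False
      then show ?thesis
        using keeps_sign[of y a] neg \<open>a < g\<close> by simp
    qed
    moreover have "\<phi> y \<noteq> 0"
      using zero that by simp
    ultimately show ?thesis
      by simp
  qed
  show ?thesis
    unfolding crosses_upward_at_def using above below zero by blast
qed

lemma crosses_upward_at_Max:
  assumes "finite I" "I \<noteq> {}" and crosses: "\<forall>i\<in>I. crosses_upward_at (\<phi> i) (g i)"
  shows "crosses_upward_at (\<lambda>y. Max ((\<lambda>i. \<phi> i y) ` I)) (Min (g ` I))"
proof -
  have "Min (g ` I) \<in> g ` I"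
    using assms(1,2) by simp
  then obtain i0 where i0: "i0 \<in> I" "g i0 = Min (g ` I)"
    by auto
  have below_Min: "Min (g ` I) \<le> g i" if "i \<in> I" for i
    using assms(1) that by simp
  have neg: "\<phi> i y < 0" if "i \<in> I" "y < g i" for i y
    using crosses that unfolding crosses_upward_at_def by blast
  have nonpos: "\<phi> i y \<le> 0" if "i \<in> I" "y \<le> g i" for i y
  proof (cases "y = g i")
    case True
    then show ?thesis
      using crosses that by (simp add: crosses_upward_at_def)
  next
    case False
    then show ?thesis
      using neg[of i y] that by simp
  qed
  show ?thesis
    unfolding crosses_upward_at_def
  proof (intro conjI allI impI)
    fix y
    assume "y < Min (g ` I)"
    then show "Max ((\<lambda>i. \<phi> i y) ` I) < 0"
      using assms(1,2) neg below_Min by (simp add: less_le_trans)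
  next
    have "\<phi> i0 (Min (g ` I)) = 0"
      using crosses i0 by (metis crosses_upward_at_def)
    then show "Max ((\<lambda>i. \<phi> i (Min (g ` I))) ` I) = 0"
      using assms(1) i0(1) nonpos below_Min by (intro Max_eqI) (auto intro: rev_image_eqI)
  next
    fix y
    assume "Min (g ` I) < y"
    then have "0 < \<phi> i0 y"
      using crosses i0 by (simp add: crosses_upward_at_def)
    then show "0 < Max ((\<lambda>i. \<phi> i y) ` I)"
      using assms(1,2) i0(1) by (auto simp: Max_gr_iff)
  qed
qed

lemma infdist_UN_eq_Min:
  assumes "finite I" "I \<noteq> {}" "\<forall>i\<in>I. A i \<noteq> {}"
  shows "infdist p (\<Union>i\<in>I. A i) = Min ((\<lambda>i. infdist p (A i)) ` I)"
  using assms
proof (induction I rule: finite_ne_induct)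
  case (insert i I)
  then show ?case
    by (simp add: infdist_Un_min)
qed simp

lemma epigraph_Min_eq_UN:
  assumes "finite I" "I \<noteq> {}"
  shows "epigraph S (\<lambda>x. Min ((\<lambda>i. f i x) ` I)) = (\<Union>i\<in>I. epigraph S (f i))"
  using assms by (auto simp: epigraph_def Min_le_iff)

lemma dist_below_epigraph_ge:
  fixes f :: "'a::metric_space \<Rightarrow> real"
  assumes "\<forall>w. 0 < f w" "\<forall>w\<in>cball x R. c \<le> f w" "0 \<le> R" "y \<le> 0"
    and "q \<in> epigraph UNIV f"
  shows "min (sqrt (R\<^sup>2 + y\<^sup>2)) (c - y) \<le> dist (x, y) q"
proof -
  obtain x' y' where q: "q = (x', y')" and "f x' \<le> y'"
    using assms(5) by (cases q) (auto simp: epigraph_def)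
  moreover have "0 < f x'"
    using assms(1) by simp
  ultimately have "- y \<le> y' - y"
    by simp
  have dist_q: "dist (x, y) q = sqrt ((dist x x')\<^sup>2 + (y' - y)\<^sup>2)"
    by (simp add: q dist_Pair_Pair dist_real_def power2_commute)
  show ?thesis
  proof (cases "dist x x' \<le> R")
    case True
    then have "c \<le> f x'"
      using assms(2) by simp
    then have "c - y \<le> y' - y"
      using \<open>f x' \<le> y'\<close> by simp
    also have "\<dots> \<le> dist (x, y) q"
      unfolding dist_q by (simp add: real_le_rsqrt)
    finally show ?thesis
      by simp
  next
    case False
    have "R\<^sup>2 \<le> (dist x x')\<^sup>2" "y\<^sup>2 \<le> (y' - y)\<^sup>2"
      using False assms(3,4) \<open>- y \<le> y' - y\<close> power_mono[of "-y" "y' - y" 2] by auto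
    then have "sqrt (R\<^sup>2 + y\<^sup>2) \<le> dist (x, y) q"
      unfolding dist_q by simp
    then show ?thesis
      by simp
  qed
qed

text \<open>Far below \<open>x\<close>, the distance to \<open>(x', y')\<close> exceeds the depth \<open>-y\<close> by only
  \<open>O(a\<^sup>2 / -y)\<close> with \<open>a = dist x x'\<close>, while every point of the epigraph is either horizontally
  farther than \<open>a + 1\<close> from \<open>x\<close> or at height at least \<open>c\<close>, the minimum of \<open>f\<close> on
  \<open>cball x (a + 1)\<close>.\<close>

lemma exists_height_closer_than_epigraph:
  fixes f :: "'a::heine_borel \<Rightarrow> real"
  assumes fpos: "\<forall>w. 0 < f w" and fcont: "continuous_on UNIV f" and "y' \<le> 0"
  shows "\<exists>y. dist (x, y) (x', y') < infdist (x, y) (epigraph UNIV f)"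
proof -
  define a where "a = dist x x'"
  define R where "R = a + 1"
  have "0 \<le> a" "0 \<le> R"
    by (simp_all add: a_def R_def)
  obtain z where "\<forall>w\<in>cball x R. f z \<le> f w"
    using continuous_attains_inf[of "cball x R" f] continuous_on_subset[OF fcont] \<open>0 \<le> R\<close>
    by auto
  moreover define c where "c = f z"
  ultimately have c_le: "\<forall>w\<in>cball x R. c \<le> f w" and "0 < c"
    using fpos by auto
  define y where "y = min y' (- (a\<^sup>2 / c) - 1)"
  have "y \<le> y'" "a\<^sup>2 / c + 1 \<le> - y"
    by (simp_all add: y_def)
  moreover have "0 \<le> a\<^sup>2 / c"
    using \<open>0 < c\<close> by simp
  ultimately have "y < 0"
    by linarith
  have "dist (x, y) (x', y') = sqrt (a\<^sup>2 + (y' - y)\<^sup>2)"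
    by (simp add: a_def dist_Pair_Pair dist_real_def power2_commute)
  also have "\<dots> \<le> sqrt (a\<^sup>2 + y\<^sup>2)"
    using \<open>y \<le> y'\<close> \<open>y' \<le> 0\<close> power_mono[of "y' - y" "- y" 2] by simp
  also have "\<dots> < min (sqrt (R\<^sup>2 + y\<^sup>2)) (c - y)"
  proof -
    have "a\<^sup>2 < R\<^sup>2"
      using \<open>0 \<le> a\<close> by (simp add: R_def power_strict_mono)
    then have "sqrt (a\<^sup>2 + y\<^sup>2) < sqrt (R\<^sup>2 + y\<^sup>2)"
      by simp
    have "a\<^sup>2 + c \<le> c * - y"
      using mult_left_mono[OF \<open>a\<^sup>2 / c + 1 \<le> - y\<close>, of c] \<open>0 < c\<close>
      by (simp add: distrib_left)
    moreover have "(c - y)\<^sup>2 = c\<^sup>2 + 2 * (c * - y) + y\<^sup>2"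
      by (simp add: power2_eq_square algebra_simps)
    moreover have "0 < c\<^sup>2" "0 \<le> a\<^sup>2"
      using \<open>0 < c\<close> by simp_all
    ultimately have "a\<^sup>2 + y\<^sup>2 < (c - y)\<^sup>2"
      using \<open>0 < c\<close> by linarith
    then have "sqrt (a\<^sup>2 + y\<^sup>2) < sqrt ((c - y)\<^sup>2)"
      by (rule real_sqrt_less_mono)
    also have "sqrt ((c - y)\<^sup>2) = c - y"
      using \<open>0 < c\<close> \<open>y < 0\<close> by simp
    finally show ?thesis
      using \<open>sqrt (a\<^sup>2 + y\<^sup>2) < sqrt (R\<^sup>2 + y\<^sup>2)\<close> by simp
  qed
  also have "\<dots> \<le> infdist (x, y) (epigraph UNIV f)"
  proof -
    have "epigraph UNIV f \<noteq> {}"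
      by (auto simp: epigraph_def)
    then show ?thesis
      unfolding infdist_notempty[OF \<open>epigraph UNIV f \<noteq> {}\<close>]
      using dist_below_epigraph_ge[OF fpos c_le \<open>0 \<le> R\<close>] \<open>y < 0\<close>
      by (intro cINF_greatest) auto
  qed
  finally show ?thesis
    by blast
qed

definition equidistant_heights :: "('a::metric_space \<times> real) set \<Rightarrow> ('a \<times> real) set \<Rightarrow> 'a \<Rightarrow> real set" where
  "equidistant_heights K M x = {y. (x, y) \<in> equidistant_set K M}"

definition equidistance_defect :: "('a::metric_space \<times> real) set \<Rightarrow> ('a \<times> real) set \<Rightarrow> 'a \<Rightarrow> real \<Rightarrow> real" where
  "equidistance_defect K M x y = infdist (x, y) K - infdist (x, y) M"

lemma mem_equidistant_set_iff_defect:
  "(x, y) \<in> equidistant_set K M \<longleftrightarrow> equidistance_defect K M x y = 0"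
  by (simp add: equidistant_set_def equidistance_defect_def)

lemma equidistance_defect_epigraph_crosses_upward:
  fixes f :: "'a::heine_borel \<Rightarrow> real"
  assumes fpos: "\<forall>w. 0 < f w" and fcont: "continuous_on UNIV f"
    and "closed K" and "(x', y') \<in> K" "y' \<le> 0" and disjoint: "K \<inter> epigraph UNIV f = {}"
    and unique: "equidistant_heights K (epigraph UNIV f) x = {g}"
  shows "crosses_upward_at (equidistance_defect K (epigraph UNIV f) x) g"
proof -
  obtain a where "dist (x, a) (x', y') < infdist (x, a) (epigraph UNIV f)"
    using exists_height_closer_than_epigraph[OF fpos fcont \<open>y' \<le> 0\<close>] by blast
  then have "equidistance_defect K (epigraph UNIV f) x a < 0"
    using infdist_le[OF \<open>(x', y') \<in> K\<close>, of "(x, a)"] by (simp add: equidistance_defect_def)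
  then show ?thesis
  proof (rule crosses_upward_at_if_unique_zero[rotated 3])
    show "continuous_on UNIV (equidistance_defect K (epigraph UNIV f) x)"
      unfolding equidistance_defect_def by (intro continuous_intros)
    show "equidistance_defect K (epigraph UNIV f) x y = 0 \<longleftrightarrow> y = g" for y
      using unique by (auto simp: set_eq_iff equidistant_heights_def mem_equidistant_set_iff_defect)
    show "0 < equidistance_defect K (epigraph UNIV f) x y" if "f x \<le> y" for y
    proof -
      have "(x, y) \<in> epigraph UNIV f" "(x, y) \<notin> K"
        using that disjoint by (auto simp: epigraph_def)
      then show ?thesis
        using infdist_pos_not_in_closed[OF \<open>closed K\<close>] \<open>(x', y') \<in> K\<close>
        by (auto simp: equidistance_defect_def)
    qed
  qed
qed

lemma equidistance_defect_UN:
  assumes "finite I" "I \<noteq> {}" "\<forall>i\<in>I. M i \<noteq> {}"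
  shows "equidistance_defect K (\<Union>i\<in>I. M i) x y = Max ((\<lambda>i. equidistance_defect K (M i) x y) ` I)"
proof -
  have "Min ((\<lambda>i. infdist (x, y) (M i)) ` I) \<in> (\<lambda>i. infdist (x, y) (M i)) ` I"
    using assms(1,2) by simp
  then obtain j where "j \<in> I" "Min ((\<lambda>i. infdist (x, y) (M i)) ` I) = infdist (x, y) (M j)"
    by auto
  then have "infdist (x, y) K - Min ((\<lambda>i. infdist (x, y) (M i)) ` I)
      = Max ((\<lambda>i. infdist (x, y) K - infdist (x, y) (M i)) ` I)"
    using assms(1) Min_le[of "(\<lambda>i. infdist (x, y) (M i)) ` I"]
    by (intro Max_eqI[symmetric]) (auto intro: rev_image_eqI)
  then show ?thesis
    using infdist_UN_eq_Min[OF assms] by (simp add: equidistance_defect_def)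
qed

lemma Inf_eq_Sup_ereal_image_iff:
  "Inf (ereal ` A) = Sup (ereal ` A) \<longleftrightarrow> is_singleton A"
proof
  assume Inf_eq_Sup: "Inf (ereal ` A) = Sup (ereal ` A)"
  then have "A \<noteq> {}"
    by (auto simp: top_ereal_def bot_ereal_def)
  have Sup_eq: "ereal z = Sup (ereal ` A)" if "z \<in> A" for z
  proof (rule antisym)
    show "ereal z \<le> Sup (ereal ` A)"
      using that by (simp add: Sup_upper)
    have "Inf (ereal ` A) \<le> ereal z"
      using that by (simp add: Inf_lower)
    then show "Sup (ereal ` A) \<le> ereal z"
      using Inf_eq_Sup by simp
  qed
  have "z = z'" if "z \<in> A" "z' \<in> A" for z z'
    using Sup_eq[OF that(1)] Sup_eq[OF that(2)] by (metis ereal.inject)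
  with \<open>A \<noteq> {}\<close> show "is_singleton A"
    by (rule is_singletonI')
qed (auto elim: is_singletonE)

lemma lower_eq_upper_equidistant_fun_iff:
  "lower_equidistant_fun K M x = upper_equidistant_fun K M x \<longleftrightarrow> is_singleton (equidistant_heights K M x)"
proof -
  have "{ereal y | y. (x, y) \<in> equidistant_set K M} = ereal ` equidistant_heights K M x"
    by (auto simp: equidistant_heights_def)
  then show ?thesis
    by (simp add: lower_equidistant_fun_def upper_equidistant_fun_def Inf_eq_Sup_ereal_image_iff)
qed

lemma is_equidistant_function_iff:
  "is_equidistant_function K M \<longleftrightarrow> (\<forall>x. is_singleton (equidistant_heights K M x))"
  by (simp add: is_equidistant_function_def is_singleton_iff_ex1 equidistant_heights_def)

lemma equidistant_heights_epigraph_Min: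
  fixes f :: "'i \<Rightarrow> 'a::heine_borel \<Rightarrow> real"
  assumes "finite I" "I \<noteq> {}" and fpos: "\<forall>i\<in>I. \<forall>w. 0 < f i w"
    and fcont: "\<forall>i\<in>I. continuous_on UNIV (f i)" and "closed K" "(x', y') \<in> K" "y' \<le> 0"
    and disjoint: "\<forall>i\<in>I. K \<inter> epigraph UNIV (f i) = {}"
    and heights: "\<forall>i\<in>I. equidistant_heights K (epigraph UNIV (f i)) x = {g i}"
  shows "equidistant_heights K (epigraph UNIV (\<lambda>w. Min ((\<lambda>i. f i w) ` I))) x = {Min (g ` I)}"
proof -
  let ?L = "epigraph UNIV (\<lambda>w. Min ((\<lambda>i. f i w) ` I))"
  have "epigraph UNIV (f i) \<noteq> {}" for i
    by (auto simp: epigraph_def)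
  then have defect_Max: "equidistance_defect K ?L x
      = (\<lambda>y. Max ((\<lambda>i. equidistance_defect K (epigraph UNIV (f i)) x y) ` I))"
    using assms(1,2) by (intro ext) (simp add: epigraph_Min_eq_UN equidistance_defect_UN)
  have "crosses_upward_at (equidistance_defect K (epigraph UNIV (f i)) x) (g i)" if "i \<in> I" for i
    by (rule equidistance_defect_epigraph_crosses_upward[OF bspec[OF fpos that] bspec[OF fcont that]
          assms(5-7) bspec[OF disjoint that] bspec[OF heights that]])
  then have "crosses_upward_at (equidistance_defect K ?L x) (Min (g ` I))"
    unfolding defect_Max using assms(1,2) by (intro crosses_upward_at_Max ballI)
  then show ?thesis
    by (auto simp: equidistant_heights_def mem_equidistant_set_iff_defect crosses_upward_at_zero_iff)
qed

lemma is_singleton_equidistant_heights_epigraph_Min: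
  fixes f :: "'i \<Rightarrow> 'a::heine_borel \<Rightarrow> real"
  assumes "finite I" "I \<noteq> {}" "\<forall>i\<in>I. \<forall>w. 0 < f i w" "\<forall>i\<in>I. continuous_on UNIV (f i)"
    and "closed K" "(x', y') \<in> K" "y' \<le> 0" "\<forall>i\<in>I. K \<inter> epigraph UNIV (f i) = {}"
    and "\<forall>i\<in>I. is_singleton (equidistant_heights K (epigraph UNIV (f i)) x)"
  shows "is_singleton (equidistant_heights K (epigraph UNIV (\<lambda>w. Min ((\<lambda>i. f i w) ` I))) x)"
proof -
  have "\<forall>i\<in>I. \<exists>g. equidistant_heights K (epigraph UNIV (f i)) x = {g}"
    using assms(9) by (simp add: is_singleton_def)
  then obtain g where "\<forall>i\<in>I. equidistant_heights K (epigraph UNIV (f i)) x = {g i}"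
    by metis
  then have "equidistant_heights K (epigraph UNIV (\<lambda>w. Min ((\<lambda>i. f i w) ` I))) x = {Min (g ` I)}"
    by (rule equidistant_heights_epigraph_Min[OF assms(1-8)])
  then show ?thesis
    by simp
qed

theorem corollary7:
  fixes I :: "'i set" and f :: "'i \<Rightarrow> (real^'n) \<Rightarrow> real" and K :: "((real^'n) \<times> real) set"
  assumes "finite I" and "I \<noteq> {}"
    and "\<forall>i\<in>I. \<forall>x. f i x > 0"
    and "\<forall>i\<in>I. continuous_on UNIV (f i)"
    and "closed K" and "K \<noteq> {}"
    and "\<exists>x y. (x, y) \<in> K \<and> y \<le> 0"
    and "\<forall>i\<in>I. K \<inter> epigraph UNIV (f i) = {}"
  shows "(\<forall>x. (\<forall>i\<in>I. lower_equidistant_fun K (epigraph UNIV (f i)) x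
                      = upper_equidistant_fun K (epigraph UNIV (f i)) x)
              \<longrightarrow> upper_equidistant_fun K (epigraph UNIV (\<lambda>x. Min ((\<lambda>i. f i x) ` I))) x
                  = lower_equidistant_fun K (epigraph UNIV (\<lambda>x. Min ((\<lambda>i. f i x) ` I))) x)
       \<and> ((\<forall>i\<in>I. is_equidistant_function K (epigraph UNIV (f i)))
              \<longrightarrow> is_equidistant_function K (epigraph UNIV (\<lambda>x. Min ((\<lambda>i. f i x) ` I))))"
proof -
  let ?M = "epigraph UNIV (\<lambda>x. Min ((\<lambda>i. f i x) ` I))"
  obtain x' y' where K: "(x', y') \<in> K" "y' \<le> 0"
    using assms(7) by blast
  note singleton_Min = is_singleton_equidistant_heights_epigraph_Min[OF assms(1-5) K assms(8)]
  show ?thesis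
  proof (intro conjI allI impI)
    fix x
    assume "\<forall>i\<in>I. lower_equidistant_fun K (epigraph UNIV (f i)) x
                   = upper_equidistant_fun K (epigraph UNIV (f i)) x"
    then have "is_singleton (equidistant_heights K ?M x)"
      by (intro singleton_Min) (simp add: lower_eq_upper_equidistant_fun_iff)
    then show "upper_equidistant_fun K ?M x = lower_equidistant_fun K ?M x"
      by (simp add: lower_eq_upper_equidistant_fun_iff[symmetric])
  next
    assume "\<forall>i\<in>I. is_equidistant_function K (epigraph UNIV (f i))"
    then show "is_equidistant_function K ?M"
      by (simp add: is_equidistant_function_iff singleton_Min)
  qed
qed

end
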